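(* Let $\mathsf x\in\mathbb R^m$ be an $s$-analytic random vector and let $f\colon\mathbb R^m\to\mathbb R^k$, with $m\le k$, be a real analytic immersion (i.e., $Jf(\mathbf v)>0$ for all $\mathbf v\in\mathbb R^m$). Then $f(\mathsf x)$ is $s$-analytic.
   Context: For differentiable $h\colon\mathbb R^k\to\mathbb R^l$ with differential $Dh(\mathbf v)\in\mathbb R^{l\times k}$, $Jh(\mathbf v)=\sqrt{\det(Dh(\mathbf v)^TDh(\mathbf v))}$ if $l\ge k$ and $\sqrt{\det(Dh(\mathbf v)Dh(\mathbf v)^T)}$ otherwise. A Borel measure $\mu$ on $\mathbb R^m$ is $s$-analytic ($s\in\{1,\dots,m\}$) if for every Borel $\mathcal U\subseteq\mathbb R^m$ with $\mu(\mathcal U)>0$ there exist a Borel set $\mathcal A\subseteq\mathbb R^s$ with $\lambda^s(\mathcal A)>0$ and a real analytic $h\colon\mathbb R^s\to\mathbb R^m$ with $Jh$ not identically zero such that $h(\mathcal A)\subseteq\mathcal U$. A random vector is $s$-analytic if its distribution is $s$-analytic. *)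

theory Defs
  imports "HOL-Analysis.Analysis" "HOL-Probability.Probability"
begin

definition real_analytic :: "(real^'a \<Rightarrow> real^'b) \<Rightarrow> bool" where
  "real_analytic h \<longleftrightarrow>
     (\<forall>a. \<exists>r>0. \<exists>c :: ('a \<Rightarrow> nat) \<Rightarrow> real^'b.
        \<forall>x\<in>ball a r. ((\<lambda>\<alpha>. (\<Prod>i\<in>UNIV. (x$i - a$i) ^ \<alpha> i) *\<^sub>R c \<alpha>) has_sum h x) UNIV)"

text \<open>Differential Dh(v) as an l x k matrix (rows indexed by the target coordinates).\<close>
definition Dmat :: "(real^'a \<Rightarrow> real^'b) \<Rightarrow> real^'a \<Rightarrow> real^'a^'b" where
  "Dmat h v = matrix (frechet_derivative h (at v))"

definition Jac :: "(real^'a \<Rightarrow> real^'b) \<Rightarrow> real^'a \<Rightarrow> real" where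
  "Jac h v = (if CARD('b) \<ge> CARD('a)
              then sqrt (det (transpose (Dmat h v) ** Dmat h v))
              else sqrt (det (Dmat h v ** transpose (Dmat h v))))"

text \<open>A Borel measure mu on real^'m is s-analytic, where s = CARD('s) in {1..m}.\<close>
definition s_analytic :: "'s::finite itself \<Rightarrow> (real^'m) measure \<Rightarrow> bool" where
  "s_analytic _ \<mu> \<longleftrightarrow> CARD('s) \<le> CARD('m) \<and>
     (\<forall>U \<in> sets borel. emeasure \<mu> U > 0 \<longrightarrow>
        (\<exists>(A :: (real^'s) set) (h :: real^'s \<Rightarrow> real^'m).
            A \<in> sets borel \<and> emeasure lborel A > 0 \<and>
            real_analytic h \<and> (\<exists>v. Jac h v \<noteq> 0) \<and> h ` A \<subseteq> U))"

end

theory Submission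
  imports Defs
begin

text \<open>A Borel set of positive \<open>f(x)\<close>-mass pulls back to a Borel set of positive \<open>x\<close>-mass, on
  which the \<open>s\<close>-analyticity of \<open>x\<close> provides a real analytic parametrisation \<open>h\<close> of a set of
  positive Lebesgue measure with \<open>Jh(v) \<noteq> 0\<close> somewhere. Then \<open>f \<circ> h\<close> parametrises a piece of the
  original set. It is real analytic because substituting the local expansion of \<open>h\<close> into that of
  \<open>f\<close> gives an absolutely convergent multiple series, which may be regrouped by monomials. Its
  Jacobian is nonzero at \<open>v\<close>: for \<open>l \<ge> k\<close> the Gram determinant \<open>det (A\<^sup>T A)\<close> vanishes iff
  \<open>A\<close> has a nontrivial kernel, and \<open>Df(h v) Dh(v)\<close> is injective because both factors are.\<close>

subsection \<open>Unconditional sums\<close>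

lemma norm_le_card_mult: "(\<And>j. \<bar>y $ j\<bar> \<le> t) \<Longrightarrow> norm (y :: real^'n) \<le> real CARD('n) * t"
  using norm_le_l1_cart[of y] sum_mono[of UNIV "\<lambda>j. \<bar>y $ j\<bar>" "\<lambda>_. t"] by simp

lemma summable_on_sum:
  fixes f :: "'i \<Rightarrow> 'x \<Rightarrow> real"
  assumes "finite I" "\<And>i. i \<in> I \<Longrightarrow> f i summable_on A"
  shows "(\<lambda>x. \<Sum>i\<in>I. f i x) summable_on A"
  using assms by (induction I rule: finite_induct) (auto intro: summable_on_add)

lemma summable_on_norm_vec:
  fixes g :: "'x \<Rightarrow> real^'n"
  assumes "g summable_on A"
  shows "(\<lambda>x. norm (g x)) summable_on A"
proof -
  have "(\<lambda>x. \<bar>g x $ i\<bar>) summable_on A" for i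
    using summable_on_bounded_linear[OF bounded_linear_vec_nth assms]
      summable_on_iff_abs_summable_on_real by force
  then have "(\<lambda>x. \<Sum>i\<in>UNIV. \<bar>g x $ i\<bar>) summable_on A"
    by (intro summable_on_sum) auto
  then show ?thesis
    by (rule summable_on_comparison_test) (auto simp: norm_le_l1_cart)
qed

lemma summable_on_dominated:
  fixes g f :: "'x \<Rightarrow> real"
  assumes "(f has_sum S) A" "B \<subseteq> A" "\<And>x. x \<in> A \<Longrightarrow> 0 \<le> f x"
    "\<And>x. x \<in> B \<Longrightarrow> 0 \<le> g x" "\<And>x. x \<in> B \<Longrightarrow> g x \<le> q * f x" "0 \<le> q"
  shows "g summable_on B" "infsum g B \<le> q * S"
proof -
  have qf: "((\<lambda>x. q * f x) has_sum q * S) A" using has_sum_cmult_right[OF assms(1)] .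
  have "(\<lambda>x. q * f x) summable_on B"
    using has_sum_imp_summable[OF qf] assms(2) by (rule summable_on_subset_banach)
  then show g: "g summable_on B"
    by (rule summable_on_comparison_test) (use assms(4,5) in auto)
  have "infsum g B \<le> infsum (\<lambda>x. q * f x) A"
    using assms(2-6) by (intro infsum_mono_neutral[OF g has_sum_imp_summable[OF qf]]) auto
  also have "\<dots> = q * S" using qf by (simp add: infsumI)
  finally show "infsum g B \<le> q * S" .
qed

lemma has_sum_prod_PiE_nonneg:
  fixes g :: "'i \<Rightarrow> 'x \<Rightarrow> real"
  assumes "finite A" "\<And>i. i \<in> A \<Longrightarrow> (g i has_sum s i) (B i)"
    "\<And>i y. i \<in> A \<Longrightarrow> y \<in> B i \<Longrightarrow> 0 \<le> g i y"
  shows "((\<lambda>\<phi>. \<Prod>i\<in>A. g i (\<phi> i)) has_sum (\<Prod>i\<in>A. s i)) (PiE A B)"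
  using assms
proof (induction A rule: finite_induct)
  case empty
  show ?case by (simp add: PiE_empty_domain has_sum_finite_iff)
next
  case (insert x A)
  define G where "G = (\<lambda>(\<phi>, y). g x y * (\<Prod>i\<in>A. g i (\<phi> i)))"
  have "(g x has_sum s x) (B x)" using insert.prems(1) by simp
  then have fiber: "((\<lambda>y. G (\<phi>, y)) has_sum s x * (\<Prod>i\<in>A. g i (\<phi> i))) (B x)" for \<phi>
    using has_sum_cmult_left by (simp add: G_def)
  have outer: "((\<lambda>\<phi>. s x * (\<Prod>i\<in>A. g i (\<phi> i))) has_sum s x * (\<Prod>i\<in>A. s i)) (PiE A B)"
    using insert by (intro has_sum_cmult_right) auto
  have "G summable_on PiE A B \<times> B x"
    using insert.prems(2) insert.hyps
    by (intro summable_on_SigmaI[OF fiber has_sum_imp_summable[OF outer]])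
       (auto simp: G_def PiE_def intro!: mult_nonneg_nonneg prod_nonneg)
  then have "(G has_sum s x * (\<Prod>i\<in>A. s i)) (PiE A B \<times> B x)"
    using has_sum_SigmaI[OF fiber outer] by simp
  moreover have "G = (\<lambda>\<phi>. \<Prod>i\<in>insert x A. g i (\<phi> i)) \<circ> (\<lambda>(\<phi>, y). \<phi>(x := y))"
    using insert.hyps by (auto simp: G_def fun_eq_iff intro!: prod.cong)
  ultimately have "((\<lambda>\<phi>. \<Prod>i\<in>insert x A. g i (\<phi> i)) has_sum s x * (\<Prod>i\<in>A. s i))
      ((\<lambda>(\<phi>, y). \<phi>(x := y)) ` (PiE A B \<times> B x))"
    by (simp only: has_sum_reindex[OF inj_combinator'[OF insert.hyps(2)]])
  moreover have "PiE (insert x A) B = (\<lambda>(\<phi>, y). \<phi>(x := y)) ` (PiE A B \<times> B x)"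
    unfolding PiE_insert_eq
    by (subst swap_product [symmetric]) (simp add: image_image case_prod_unfold)
  ultimately show ?case
    using insert.hyps by simp
qed

lemma has_sum_prod_PiE_abs:
  fixes g :: "'i \<Rightarrow> 'x \<Rightarrow> real"
  assumes "finite A" "\<And>i. i \<in> A \<Longrightarrow> (g i has_sum s i) (B i)"
    "\<And>i. i \<in> A \<Longrightarrow> ((\<lambda>y. \<bar>g i y\<bar>) has_sum m i) (B i)"
  shows "((\<lambda>\<phi>. \<Prod>i\<in>A. g i (\<phi> i)) has_sum (\<Prod>i\<in>A. s i)) (PiE A B)"
    "((\<lambda>\<phi>. \<bar>\<Prod>i\<in>A. g i (\<phi> i)\<bar>) has_sum (\<Prod>i\<in>A. m i)) (PiE A B)"
proof -
  show abs: "((\<lambda>\<phi>. \<bar>\<Prod>i\<in>A. g i (\<phi> i)\<bar>) has_sum (\<Prod>i\<in>A. m i)) (PiE A B)"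
    using has_sum_prod_PiE_nonneg[where g = "\<lambda>i y. \<bar>g i y\<bar>", OF assms(1,3)] by (simp add: abs_prod)
  then have "(\<lambda>\<phi>. norm (\<Prod>i\<in>A. g i (\<phi> i))) summable_on PiE A B"
    unfolding real_norm_def by (rule has_sum_imp_summable)
  then have "(\<lambda>\<phi>. \<Prod>i\<in>A. g i (\<phi> i)) summable_on PiE A B"
    by (rule abs_summable_summable)
  moreover have "infsum (\<lambda>\<phi>. \<Prod>i\<in>A. g i (\<phi> i)) (PiE A B) = (\<Prod>i\<in>A. infsum (g i) (B i))"
    using assms(1,3) unfolding real_norm_def
    by (intro infsum_prod_PiE_abs) (auto intro: has_sum_imp_summable)
  moreover have "(\<Prod>i\<in>A. infsum (g i) (B i)) = (\<Prod>i\<in>A. s i)"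
    using assms(2) by (intro prod.cong refl infsumI)
  ultimately show "((\<lambda>\<phi>. \<Prod>i\<in>A. g i (\<phi> i)) has_sum (\<Prod>i\<in>A. s i)) (PiE A B)"
    by (simp add: summable_iff_has_sum_infsum)
qed

subsection \<open>Monomials in several variables\<close>

definition monomial :: "real^'a \<Rightarrow> ('a \<Rightarrow> nat) \<Rightarrow> real" where
  "monomial u \<alpha> = (\<Prod>i\<in>UNIV. u$i ^ \<alpha> i)"

definition mdeg :: "('a::finite \<Rightarrow> nat) \<Rightarrow> nat" where
  "mdeg \<alpha> = (\<Sum>i\<in>UNIV. \<alpha> i)"

definition unit_index :: "'a \<Rightarrow> 'a \<Rightarrow> nat" where
  "unit_index i = (\<lambda>j. if j = i then 1 else 0)"

lemma monomial_const_vec: "monomial (\<chi> i. t) \<alpha> = t ^ mdeg \<alpha>"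
  by (simp add: monomial_def mdeg_def power_sum)

lemma monomial_zero_index [simp]: "monomial u (\<lambda>_. 0) = 1"
  by (simp add: monomial_def)

lemma monomial_zero: "\<alpha> \<noteq> (\<lambda>_. 0) \<Longrightarrow> monomial 0 \<alpha> = 0"
  by (auto simp: monomial_def intro: prod_zero)

lemma monomial_unit_index [simp]: "monomial u (unit_index i) = u $ i"
proof -
  have "monomial u (unit_index i) = (\<Prod>j\<in>UNIV. if j = i then u$j else 1)"
    unfolding monomial_def unit_index_def by (intro prod.cong) auto
  then show ?thesis by (simp add: prod.delta)
qed

lemma monomial_sum_index:
  "finite K \<Longrightarrow> (\<Prod>k\<in>K. monomial u (\<tau> k)) = monomial u (\<lambda>i. \<Sum>k\<in>K. \<tau> k i)"
  unfolding monomial_def power_sum by (rule prod.swap)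

lemma mdeg_pos: "\<alpha> \<noteq> (\<lambda>_. 0) \<Longrightarrow> 1 \<le> mdeg \<alpha>"
  by (auto simp: mdeg_def Suc_le_eq)

lemma mdeg_le_1_cases:
  fixes \<alpha> :: "'a::finite \<Rightarrow> nat"
  assumes "mdeg \<alpha> \<le> 1"
  shows "\<alpha> = (\<lambda>_. 0) \<or> (\<exists>i. \<alpha> = unit_index i)"
proof (cases "\<alpha> = (\<lambda>_. 0)")
  case False
  then obtain i where i: "\<alpha> i \<noteq> 0" by auto
  have "mdeg \<alpha> = \<alpha> i + (\<Sum>j\<in>UNIV-{i}. \<alpha> j)"
    unfolding mdeg_def by (simp add: sum.remove)
  then have "\<alpha> i = 1" "(\<Sum>j\<in>UNIV-{i}. \<alpha> j) = 0" using assms i by linarith+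
  then have "\<alpha> i = 1" "\<forall>j\<in>UNIV-{i}. \<alpha> j = 0" by simp_all
  then have "\<alpha> = unit_index i" by (auto simp: unit_index_def fun_eq_iff)
  then show ?thesis by auto
qed simp

lemma abs_monomial_le: "\<bar>monomial u \<alpha>\<bar> \<le> norm u ^ mdeg \<alpha>"
  unfolding monomial_def mdeg_def power_sum abs_prod
  by (intro prod_mono) (auto simp: power_abs intro: power_mono component_le_norm_cart)

lemma abs_monomial_le_scaled:
  assumes "norm u \<le> t" "0 < t" "n \<le> mdeg \<alpha>"
  shows "\<bar>monomial u \<alpha>\<bar> \<le> (norm u / t) ^ n * t ^ mdeg \<alpha>"
proof -
  have "\<bar>monomial u \<alpha>\<bar> \<le> (norm u / t) ^ mdeg \<alpha> * t ^ mdeg \<alpha>"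
    using abs_monomial_le[of u \<alpha>] assms by (simp add: power_divide)
  also have "\<dots> \<le> (norm u / t) ^ n * t ^ mdeg \<alpha>"
    using assms by (intro mult_right_mono power_decreasing) auto
  finally show ?thesis .
qed

subsection \<open>Local expansions and differentiability\<close>

lemma real_analytic_expansion:
  fixes h :: "real^'a \<Rightarrow> real^'b"
  assumes "real_analytic h"
  obtains t c S where "0 < t"
    "\<And>u. norm u \<le> t \<Longrightarrow> ((\<lambda>\<alpha>. monomial u \<alpha> *\<^sub>R c \<alpha>) has_sum h (a + u)) UNIV"
    "((\<lambda>\<alpha>. t ^ mdeg \<alpha> * norm (c \<alpha>)) has_sum S) UNIV"
proof -
  obtain r c where r: "r > 0" and c: "\<forall>x\<in>ball a r.
      ((\<lambda>\<alpha>. (\<Prod>i\<in>UNIV. (x$i - a$i) ^ \<alpha> i) *\<^sub>R c \<alpha>) has_sum h x) UNIV"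
    using assms unfolding real_analytic_def by blast
  have expand: "((\<lambda>\<alpha>. monomial u \<alpha> *\<^sub>R c \<alpha>) has_sum h (a + u)) UNIV" if "norm u < r" for u
    using c[rule_format, of "a + u"] that by (simp add: monomial_def dist_norm)
  define t where "t = r / (2 * real CARD('a))"
  have t: "0 < t" "real CARD('a) * t < r" using r by (auto simp: t_def)
  moreover have "t \<le> real CARD('a) * t" using t(1) by simp
  ultimately have t_expand: "((\<lambda>\<alpha>. monomial u \<alpha> *\<^sub>R c \<alpha>) has_sum h (a + u)) UNIV" if "norm u \<le> t" for u
    using that by (intro expand) linarith
  have "norm (\<chi> i::'a. t) \<le> real CARD('a) * t"
    by (rule norm_le_card_mult) (use t in simp)
  then have "((\<lambda>\<alpha>. monomial (\<chi> i::'a. t) \<alpha> *\<^sub>R c \<alpha>) has_sum h (a + (\<chi> i. t))) UNIV"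
    using expand t by simp
  then have "(\<lambda>\<alpha>. norm (monomial (\<chi> i::'a. t) \<alpha> *\<^sub>R c \<alpha>)) summable_on UNIV"
    by (intro summable_on_norm_vec has_sum_imp_summable)
  then have "(\<lambda>\<alpha>. t ^ mdeg \<alpha> * norm (c \<alpha>)) summable_on UNIV"
    using t by (simp add: monomial_const_vec)
  then show ?thesis
    using that[OF t(1) t_expand] by (simp add: summable_iff_has_sum_infsum)
qed

lemma power_series_at_center:
  fixes h :: "real^'a \<Rightarrow> real^'b"
  assumes "\<And>u. norm u \<le> t \<Longrightarrow> ((\<lambda>\<alpha>. monomial u \<alpha> *\<^sub>R c \<alpha>) has_sum h (a + u)) UNIV" "0 \<le> t"
  shows "h a = c (\<lambda>_. 0)"
proof -
  have "((\<lambda>\<alpha>. monomial 0 \<alpha> *\<^sub>R c \<alpha>) has_sum c (\<lambda>_. 0)) UNIV"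
    by (rule has_sum_finite_neutralI[of "{\<lambda>_. 0}"]) (auto simp: monomial_zero)
  moreover have "((\<lambda>\<alpha>. monomial 0 \<alpha> *\<^sub>R c \<alpha>) has_sum h a) UNIV" using assms(1)[of 0] assms(2) by simp
  ultimately show ?thesis using has_sum_unique by blast
qed

lemma power_series_remainder_bound:
  fixes h :: "real^'a \<Rightarrow> real^'b"
  assumes expand: "\<And>u. norm u \<le> t \<Longrightarrow> ((\<lambda>\<alpha>. monomial u \<alpha> *\<^sub>R c \<alpha>) has_sum h (a + u)) UNIV"
    and S: "((\<lambda>\<alpha>. t ^ mdeg \<alpha> * norm (c \<alpha>)) has_sum S) UNIV" and "0 < t" and "norm u \<le> t"
  shows "norm (h (a + u) - h a - (\<Sum>i\<in>UNIV. u$i *\<^sub>R c (unit_index i))) \<le> (norm u / t)^2 * S"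
proof -
  define F :: "('a \<Rightarrow> nat) set" where "F = insert (\<lambda>_. 0) (range unit_index)"
  have "unit_index i i \<noteq> 0" for i :: 'a
    by (simp add: unit_index_def)
  then have "(\<lambda>_. 0) \<notin> range (unit_index :: 'a \<Rightarrow> _)"
    by (metis rangeE)
  moreover have "inj (unit_index :: 'a \<Rightarrow> _)"
    by (auto simp: inj_def unit_index_def fun_eq_iff split: if_splits)
  ultimately have sum_F: "(\<Sum>\<alpha>\<in>F. monomial u \<alpha> *\<^sub>R c \<alpha>) = c (\<lambda>_. 0) + (\<Sum>i\<in>UNIV. u$i *\<^sub>R c (unit_index i))"
    by (simp add: F_def sum.reindex)
  have deg2: "2 \<le> mdeg \<alpha>" if "\<alpha> \<notin> F" for \<alpha>
    using mdeg_le_1_cases[of \<alpha>] that by (force simp: F_def)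
  have term_bound: "\<bar>monomial u \<alpha>\<bar> * norm (c \<alpha>) \<le> (norm u / t)^2 * (t ^ mdeg \<alpha> * norm (c \<alpha>))"
    if "\<alpha> \<in> UNIV - F" for \<alpha>
    using mult_right_mono[OF abs_monomial_le_scaled[OF assms(4,3) deg2], of \<alpha> "norm (c \<alpha>)"] that
    by (simp add: mult.assoc)
  note dominated = summable_on_dominated[OF S, where q = "(norm u / t)^2" and B = "UNIV - F"
      and g = "\<lambda>\<alpha>. \<bar>monomial u \<alpha>\<bar> * norm (c \<alpha>)"]
  have bound: "(\<lambda>\<alpha>. \<bar>monomial u \<alpha>\<bar> * norm (c \<alpha>)) summable_on (UNIV - F)"
    "infsum (\<lambda>\<alpha>. \<bar>monomial u \<alpha>\<bar> * norm (c \<alpha>)) (UNIV - F) \<le> (norm u / t)^2 * S"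
    by (rule dominated(1), use term_bound assms(3) in auto)
       (rule dominated(2), use term_bound assms(3) in auto)
  have "finite F" by (simp add: F_def)
  then have "((\<lambda>\<alpha>. monomial u \<alpha> *\<^sub>R c \<alpha>) has_sum h (a + u) - (\<Sum>\<alpha>\<in>F. monomial u \<alpha> *\<^sub>R c \<alpha>)) (UNIV - F)"
    by (intro has_sum_Diff[OF expand[OF assms(4)] has_sum_finite]) auto
  moreover have "h a = c (\<lambda>_. 0)"
    using power_series_at_center[where t = t, OF expand] assms(3) by simp
  ultimately have "norm (h (a + u) - h a - (\<Sum>i\<in>UNIV. u$i *\<^sub>R c (unit_index i)))
      \<le> infsum (\<lambda>\<alpha>. \<bar>monomial u \<alpha>\<bar> * norm (c \<alpha>)) (UNIV - F)"
    using bound(1) by (intro norm_has_sum_bound) (simp_all add: sum_F diff_diff_eq summable_iff_has_sum_infsum)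
  with bound(2) show ?thesis by linarith
qed

lemma power_series_has_derivative:
  fixes h :: "real^'a \<Rightarrow> real^'b"
  assumes expand: "\<And>u. norm u \<le> t \<Longrightarrow> ((\<lambda>\<alpha>. monomial u \<alpha> *\<^sub>R c \<alpha>) has_sum h (a + u)) UNIV"
    and S: "((\<lambda>\<alpha>. t ^ mdeg \<alpha> * norm (c \<alpha>)) has_sum S) UNIV" and t: "0 < t"
  shows "(h has_derivative (\<lambda>u. \<Sum>i\<in>UNIV. u$i *\<^sub>R c (unit_index i))) (at a)"
  unfolding has_derivative_at
proof
  define L where "L = (\<lambda>u::real^'a. \<Sum>i\<in>UNIV. u$i *\<^sub>R c (unit_index i))"
  show "bounded_linear L"
    unfolding L_def by (intro bounded_linear_sum bounded_linear_scaleR_const bounded_linear_vec_nth)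
  have "norm (h (a + k) - h a - L k) / norm k \<le> norm k * (S / t^2)" if "norm k < t" for k
  proof (cases "k = 0")
    case False
    then have "norm (h (a + k) - h a - L k) / norm k \<le> (norm k / t)^2 * S / norm k"
      using power_series_remainder_bound[OF expand S t, of k] that
      by (intro divide_right_mono) (auto simp: L_def)
    also have "\<dots> = norm k * (S / t^2)" using False by (simp add: power2_eq_square field_simps)
    finally show ?thesis .
  qed simp
  moreover have "\<forall>\<^sub>F k in at (0::real^'a). norm k < t"
    using eventually_at_ball[OF t, of "0::real^'a" UNIV] by (auto elim!: eventually_mono)
  ultimately have "\<forall>\<^sub>F k in at 0. norm (norm (h (a + k) - h a - L k) / norm k) \<le> norm k * (S / t^2)"
    by (auto elim!: eventually_mono)
  moreover have "((\<lambda>k::real^'a. norm k * (S / t^2)) \<longlongrightarrow> 0) (at 0)"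
    by (intro tendsto_mult_left_zero tendsto_norm_zero tendsto_ident_at)
  ultimately show "((\<lambda>k. norm (h (a + k) - h a - L k) / norm k) \<longlongrightarrow> 0) (at 0)"
    by (rule Lim_null_comparison)
qed

lemma real_analytic_differentiable:
  fixes h :: "real^'a \<Rightarrow> real^'b"
  assumes "real_analytic h"
  shows "h differentiable (at a)"
proof -
  obtain t c S where t: "0 < t"
    and expand: "\<And>u. norm u \<le> t \<Longrightarrow> ((\<lambda>\<alpha>. monomial u \<alpha> *\<^sub>R c \<alpha>) has_sum h (a + u)) UNIV"
    and S: "((\<lambda>\<alpha>. t ^ mdeg \<alpha> * norm (c \<alpha>)) has_sum S) UNIV"
    by (rule real_analytic_expansion[OF assms, where a = a]) blast
  show ?thesis
    using power_series_has_derivative[OF expand S t] unfolding differentiable_def by blast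
qed

lemma real_analytic_borel_measurable:
  fixes f :: "real^'a \<Rightarrow> real^'b"
  assumes "real_analytic f"
  shows "f \<in> borel_measurable borel"
  by (intro borel_measurable_continuous_onI differentiable_imp_continuous_on
      differentiable_at_imp_differentiable_on real_analytic_differentiable assms)

subsection \<open>Composition\<close>

lemma power_series_increment_coordinate:
  fixes h :: "real^'a \<Rightarrow> real^'b"
  assumes expand: "\<And>u. norm u \<le> t \<Longrightarrow> ((\<lambda>\<alpha>. monomial u \<alpha> *\<^sub>R c \<alpha>) has_sum h (a + u)) UNIV"
    and S: "((\<lambda>\<alpha>. t ^ mdeg \<alpha> * norm (c \<alpha>)) has_sum S) UNIV" and "0 < t" "norm u \<le> t"
  shows "((\<lambda>\<alpha>. monomial u \<alpha> * c \<alpha> $ j) has_sum (h (a + u) - h a) $ j) (UNIV - {\<lambda>_. 0})"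
    "(\<lambda>\<alpha>. \<bar>monomial u \<alpha> * c \<alpha> $ j\<bar>) summable_on (UNIV - {\<lambda>_. 0})"
    "(\<Sum>\<^sub>\<infinity>\<alpha>\<in>(UNIV - {\<lambda>_. 0}). \<bar>monomial u \<alpha> * c \<alpha> $ j\<bar>) \<le> norm u / t * S"
proof -
  have "((\<lambda>\<alpha>. monomial u \<alpha> * c \<alpha> $ j) has_sum h (a + u) $ j) UNIV"
    using has_sum_bounded_linear[OF bounded_linear_vec_nth expand[OF assms(4)]] by simp
  moreover have "((\<lambda>\<alpha>. monomial u \<alpha> * c \<alpha> $ j) has_sum c (\<lambda>_. 0) $ j) {\<lambda>_. 0}"
    using has_sum_finite[of "{\<lambda>_. 0}" "\<lambda>\<alpha>. monomial u \<alpha> * c \<alpha> $ j"] by simp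
  ultimately have "((\<lambda>\<alpha>. monomial u \<alpha> * c \<alpha> $ j) has_sum h (a + u) $ j - c (\<lambda>_. 0) $ j) (UNIV - {\<lambda>_. 0})"
    by (rule has_sum_Diff) simp
  then show "((\<lambda>\<alpha>. monomial u \<alpha> * c \<alpha> $ j) has_sum (h (a + u) - h a) $ j) (UNIV - {\<lambda>_. 0})"
    using power_series_at_center[where t = t, OF expand] assms by simp
  have term_bound: "\<bar>monomial u \<alpha> * c \<alpha> $ j\<bar> \<le> norm u / t * (t ^ mdeg \<alpha> * norm (c \<alpha>))"
    if "\<alpha> \<in> UNIV - {\<lambda>_. 0}" for \<alpha>
  proof -
    have "\<bar>monomial u \<alpha>\<bar> \<le> (norm u / t) ^ 1 * t ^ mdeg \<alpha>"
      using that by (intro abs_monomial_le_scaled assms mdeg_pos) simp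
    then have "\<bar>monomial u \<alpha>\<bar> * \<bar>c \<alpha> $ j\<bar> \<le> (norm u / t * t ^ mdeg \<alpha>) * norm (c \<alpha>)"
      using component_le_norm_cart[of "c \<alpha>" j] by (intro mult_mono) auto
    then show ?thesis by (simp add: abs_mult mult.assoc)
  qed
  note dominated = summable_on_dominated[OF S, where q = "norm u / t" and B = "UNIV - {\<lambda>_. 0}"
      and g = "\<lambda>\<alpha>. \<bar>monomial u \<alpha> * c \<alpha> $ j\<bar>"]
  show "(\<lambda>\<alpha>. \<bar>monomial u \<alpha> * c \<alpha> $ j\<bar>) summable_on (UNIV - {\<lambda>_. 0})"
    by (rule dominated(1)) (use term_bound assms(3) in auto)
  show "(\<Sum>\<^sub>\<infinity>\<alpha>\<in>(UNIV - {\<lambda>_. 0}). \<bar>monomial u \<alpha> * c \<alpha> $ j\<bar>) \<le> norm u / t * S"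
    by (rule dominated(2)) (use term_bound assms(3) in auto)
qed

text \<open>\<open>exponent_slots \<beta>\<close> contains each coordinate \<open>j\<close> exactly \<open>\<beta> j\<close> times, so a monomial becomes
  a product over slots, and its value at a vector of sums expands by \<open>has_sum_prod_PiE_abs\<close>
  into a sum over choices of one summand per slot.\<close>

definition exponent_slots :: "('m::finite \<Rightarrow> nat) \<Rightarrow> ('m \<times> nat) set" where
  "exponent_slots \<beta> = (SIGMA j:UNIV. {..<\<beta> j})"

lemma finite_exponent_slots [simp]: "finite (exponent_slots \<beta>)"
  by (simp add: exponent_slots_def)

lemma prod_exponent_slots: "(\<Prod>jk\<in>exponent_slots \<beta>. g (fst jk)) = (\<Prod>j\<in>UNIV. (g j :: real) ^ \<beta> j)"
proof -
  have "(\<Prod>jk\<in>exponent_slots \<beta>. g (fst jk)) = (\<Prod>j\<in>UNIV. \<Prod>k\<in>{..<\<beta> j}. g j)"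
    unfolding exponent_slots_def by (subst prod.Sigma) (auto simp: case_prod_unfold)
  then show ?thesis by simp
qed

lemma has_sum_power_series_substitution:
  fixes g :: "'m::finite \<Rightarrow> 'i \<Rightarrow> real" and d :: "('m \<Rightarrow> nat) \<Rightarrow> 'v::banach"
  assumes g: "\<And>j. (g j has_sum y $ j) A"
    and g_abs: "\<And>j. (\<lambda>\<alpha>. \<bar>g j \<alpha>\<bar>) summable_on A" "\<And>j. (\<Sum>\<^sub>\<infinity>\<alpha>\<in>A. \<bar>g j \<alpha>\<bar>) \<le> t"
    and outer: "((\<lambda>\<beta>. monomial y \<beta> *\<^sub>R d \<beta>) has_sum F) UNIV"
    and d: "(\<lambda>\<beta>. t ^ mdeg \<beta> * norm (d \<beta>)) summable_on UNIV"
  shows "((\<lambda>(\<beta>, \<tau>). (\<Prod>jk\<in>exponent_slots \<beta>. g (fst jk) (\<tau> jk)) *\<^sub>R d \<beta>) has_sum F)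
           (SIGMA \<beta>:UNIV. PiE (exponent_slots \<beta>) (\<lambda>_. A))"
proof -
  define m where "m j = (\<Sum>\<^sub>\<infinity>\<alpha>\<in>A. \<bar>g j \<alpha>\<bar>)" for j
  define T where "T = (\<lambda>(\<beta>, \<tau>). (\<Prod>jk\<in>exponent_slots \<beta>. g (fst jk) (\<tau> jk)) *\<^sub>R d \<beta>)"
  have m: "((\<lambda>\<alpha>. \<bar>g j \<alpha>\<bar>) has_sum m j) A" "0 \<le> m j" for j
    using g_abs(1) by (auto simp: m_def summable_iff_has_sum_infsum intro: infsum_nonneg)
  have fiber: "((\<lambda>\<tau>. T (\<beta>, \<tau>)) has_sum monomial y \<beta> *\<^sub>R d \<beta>) (PiE (exponent_slots \<beta>) (\<lambda>_. A))"
    "((\<lambda>\<tau>. norm (T (\<beta>, \<tau>))) has_sum (\<Prod>j\<in>UNIV. m j ^ \<beta> j) * norm (d \<beta>)) (PiE (exponent_slots \<beta>) (\<lambda>_. A))"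
    for \<beta>
  proof -
    have prod: "((\<lambda>\<tau>. \<Prod>jk\<in>exponent_slots \<beta>. g (fst jk) (\<tau> jk)) has_sum monomial y \<beta>)
        (PiE (exponent_slots \<beta>) (\<lambda>_. A))"
      "((\<lambda>\<tau>. \<bar>\<Prod>jk\<in>exponent_slots \<beta>. g (fst jk) (\<tau> jk)\<bar>) has_sum (\<Prod>j\<in>UNIV. m j ^ \<beta> j))
        (PiE (exponent_slots \<beta>) (\<lambda>_. A))"
      using has_sum_prod_PiE_abs[where A = "exponent_slots \<beta>" and g = "\<lambda>jk. g (fst jk)"
          and s = "\<lambda>jk. y $ fst jk" and B = "\<lambda>_. A" and m = "\<lambda>jk. m (fst jk)"] g m(1)
      by (simp_all add: monomial_def prod_exponent_slots)
    show "((\<lambda>\<tau>. T (\<beta>, \<tau>)) has_sum monomial y \<beta> *\<^sub>R d \<beta>) (PiE (exponent_slots \<beta>) (\<lambda>_. A))"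
      using has_sum_bounded_linear[OF bounded_linear_scaleR_left prod(1), of "d \<beta>"]
      by (simp add: T_def)
    show "((\<lambda>\<tau>. norm (T (\<beta>, \<tau>))) has_sum (\<Prod>j\<in>UNIV. m j ^ \<beta> j) * norm (d \<beta>))
        (PiE (exponent_slots \<beta>) (\<lambda>_. A))"
      using has_sum_cmult_left[OF prod(2), of "norm (d \<beta>)"] by (simp add: T_def)
  qed
  have "(\<Prod>j\<in>UNIV. m j ^ \<beta> j) \<le> t ^ mdeg \<beta>" for \<beta>
    using m(2) g_abs(2) unfolding mdeg_def power_sum m_def
    by (intro prod_mono) (auto intro: power_mono)
  then have "(\<lambda>\<beta>. (\<Prod>j\<in>UNIV. m j ^ \<beta> j) * norm (d \<beta>)) summable_on UNIV"
    using m(2) by (intro summable_on_comparison_test[OF d])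
      (auto intro!: mult_right_mono mult_nonneg_nonneg prod_nonneg zero_le_power)
  then have "(\<lambda>z. norm (T z)) summable_on (SIGMA \<beta>:UNIV. PiE (exponent_slots \<beta>) (\<lambda>_. A))"
    by (rule summable_on_SigmaI[OF fiber(2)]) simp
  then have "T summable_on (SIGMA \<beta>:UNIV. PiE (exponent_slots \<beta>) (\<lambda>_. A))"
    by (rule abs_summable_summable)
  then show ?thesis
    using has_sum_SigmaI[OF fiber(1) outer] by (simp add: T_def)
qed

lemma power_series_regroup:
  fixes \<sigma> :: "'z \<Rightarrow> 'a::finite \<Rightarrow> nat" and Q :: "'z \<Rightarrow> 'v::banach"
  assumes "0 < \<delta>"
    and sums: "\<And>u::real^'a. norm u < \<delta> \<Longrightarrow> ((\<lambda>z. monomial u (\<sigma> z) *\<^sub>R Q z) has_sum F u) I"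
  obtains E where "\<And>u. norm u < \<delta> \<Longrightarrow> ((\<lambda>\<gamma>. monomial u \<gamma> *\<^sub>R E \<gamma>) has_sum F u) UNIV"
proof -
  define G where "G \<gamma> = {z\<in>I. \<sigma> z = \<gamma>}" for \<gamma>
  define u0 :: "real^'a" where "u0 = (\<chi> i. \<delta> / (2 * real CARD('a)))"
  have "norm u0 \<le> real CARD('a) * (\<delta> / (2 * real CARD('a)))"
    by (rule norm_le_card_mult) (use assms(1) in \<open>simp add: u0_def\<close>)
  then have u0: "norm u0 < \<delta>" using assms(1) by simp
  have u0_pos: "0 < monomial u0 \<gamma>" for \<gamma>
    using assms(1) by (auto simp: monomial_def u0_def intro!: prod_pos)
  \<comment> \<open>all monomials are positive at \<open>u0\<close>, so each fibre \<open>G \<gamma>\<close> inherits summability from the series at \<open>u0\<close>\<close>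
  have Q_summable: "Q summable_on G \<gamma>" for \<gamma>
  proof -
    have "(\<lambda>z. monomial u0 (\<sigma> z) *\<^sub>R Q z) summable_on G \<gamma>"
      using sums[OF u0] by (auto simp: G_def intro: summable_on_subset_banach has_sum_imp_summable)
    then have "(\<lambda>z. inverse (monomial u0 \<gamma>) *\<^sub>R (monomial u0 (\<sigma> z) *\<^sub>R Q z)) summable_on G \<gamma>"
      by (rule summable_on_scaleR_right)
    moreover have "inverse (monomial u0 \<gamma>) *\<^sub>R (monomial u0 (\<sigma> z) *\<^sub>R Q z) = Q z" if "z \<in> G \<gamma>" for z
      using that u0_pos[of \<gamma>] by (simp add: G_def)
    ultimately show ?thesis by (rule summable_on_cong[THEN iffD1, rotated])
  qed
  show ?thesis
  proof (rule that)
    fix u :: "real^'a" assume u: "norm u < \<delta>"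
    have "inj_on (\<lambda>z. (\<sigma> z, z)) I"
      by (simp add: inj_on_def)
    then have "((\<lambda>(\<gamma>, z). monomial u (\<sigma> z) *\<^sub>R Q z) has_sum F u) ((\<lambda>z. (\<sigma> z, z)) ` I)"
      using sums[OF u] by (subst has_sum_reindex) (simp_all add: o_def)
    moreover have "(\<lambda>z. (\<sigma> z, z)) ` I = (SIGMA \<gamma>:UNIV. G \<gamma>)"
      by (auto simp: G_def image_iff)
    ultimately have grouped: "((\<lambda>(\<gamma>, z). monomial u (\<sigma> z) *\<^sub>R Q z) has_sum F u) (SIGMA \<gamma>:UNIV. G \<gamma>)"
      by simp
    have group_sum: "((\<lambda>z. monomial u (\<sigma> z) *\<^sub>R Q z) has_sum monomial u \<gamma> *\<^sub>R infsum Q (G \<gamma>)) (G \<gamma>)"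
      for \<gamma>
    proof -
      have "((\<lambda>z. monomial u \<gamma> *\<^sub>R Q z) has_sum monomial u \<gamma> *\<^sub>R infsum Q (G \<gamma>)) (G \<gamma>)"
        using Q_summable by (intro has_sum_scaleR) (simp add: summable_iff_has_sum_infsum)
      then show ?thesis by (rule has_sum_cong[THEN iffD1, rotated]) (simp add: G_def)
    qed
    show "((\<lambda>\<gamma>. monomial u \<gamma> *\<^sub>R infsum Q (G \<gamma>)) has_sum F u) UNIV"
      by (rule has_sum_SigmaD[OF grouped]) (simp add: group_sum)
  qed
qed

lemma power_series_compose_double_sum:
  fixes h :: "real^'s \<Rightarrow> real^'m" and f :: "real^'m \<Rightarrow> real^'k"
  assumes h_expand: "\<And>u. norm u \<le> t \<Longrightarrow> ((\<lambda>\<alpha>. monomial u \<alpha> *\<^sub>R c \<alpha>) has_sum h (a + u)) UNIV"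
    and S: "((\<lambda>\<alpha>. t ^ mdeg \<alpha> * norm (c \<alpha>)) has_sum S) UNIV" and t: "0 < t"
    and f_expand: "\<And>v. norm v \<le> real CARD('m) * r \<Longrightarrow>
      ((\<lambda>\<beta>. monomial v \<beta> *\<^sub>R d \<beta>) has_sum f (h a + v)) UNIV"
    and d: "(\<lambda>\<beta>. r ^ mdeg \<beta> * norm (d \<beta>)) summable_on UNIV"
    and u: "norm u \<le> t" "norm u / t * S \<le> r"
  shows "((\<lambda>(\<beta>, \<tau>). (\<Prod>jk\<in>exponent_slots \<beta>. monomial u (\<tau> jk) * c (\<tau> jk) $ fst jk) *\<^sub>R d \<beta>)
      has_sum f (h (a + u))) (SIGMA \<beta>:UNIV. PiE (exponent_slots \<beta>) (\<lambda>_. UNIV - {\<lambda>_. 0}))"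
proof -
  note inner = power_series_increment_coordinate[OF h_expand S t u(1)]
  have inner_le: "(\<Sum>\<^sub>\<infinity>\<alpha>\<in>(UNIV - {\<lambda>_. 0}). \<bar>monomial u \<alpha> * c \<alpha> $ j\<bar>) \<le> r" for j
    using inner(3)[of j] u(2) by linarith
  have "\<bar>(h (a + u) - h a) $ j\<bar> \<le> r" for j
  proof -
    have "norm ((h (a + u) - h a) $ j) \<le> (\<Sum>\<^sub>\<infinity>\<alpha>\<in>(UNIV - {\<lambda>_. 0}). \<bar>monomial u \<alpha> * c \<alpha> $ j\<bar>)"
      by (rule norm_has_sum_bound[OF _ inner(1)])
        (use inner(2)[of j] in \<open>simp add: summable_iff_has_sum_infsum\<close>)
    then show ?thesis using inner_le[of j] by simp
  qed
  then have "norm (h (a + u) - h a) \<le> real CARD('m) * r" by (rule norm_le_card_mult)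
  then have "((\<lambda>\<beta>. monomial (h (a + u) - h a) \<beta> *\<^sub>R d \<beta>) has_sum f (h (a + u))) UNIV"
    using f_expand by fastforce
  with inner(1,2) inner_le show ?thesis
    using d by (rule has_sum_power_series_substitution)
qed

text \<open>When the coordinates of an increment are bounded by \<open>r\<close>, its norm is only bounded by
  \<open>CARD('a) * r\<close>; this variant keeps the majorant at radius \<open>r\<close> while expanding on the larger ball.\<close>

lemma real_analytic_expansion_card_ball:
  fixes h :: "real^'a \<Rightarrow> real^'b"
  assumes "real_analytic h"
  obtains r c where "0 < r"
    "\<And>u. norm u \<le> real CARD('a) * r \<Longrightarrow> ((\<lambda>\<alpha>. monomial u \<alpha> *\<^sub>R c \<alpha>) has_sum h (a + u)) UNIV"
    "(\<lambda>\<alpha>. r ^ mdeg \<alpha> * norm (c \<alpha>)) summable_on UNIV"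
proof -
  obtain t c S where t: "0 < t"
    and expand: "\<And>u. norm u \<le> t \<Longrightarrow> ((\<lambda>\<alpha>. monomial u \<alpha> *\<^sub>R c \<alpha>) has_sum h (a + u)) UNIV"
    and S: "((\<lambda>\<alpha>. t ^ mdeg \<alpha> * norm (c \<alpha>)) has_sum S) UNIV"
    by (rule real_analytic_expansion[OF assms, where a = a]) blast
  define r where "r = t / real CARD('a)"
  have r: "0 < r" "real CARD('a) * r = t" using t by (auto simp: r_def)
  have "1 \<le> real CARD('a)" by (simp add: Suc_le_eq)
  then have "r \<le> t" using mult_right_mono[of 1 "real CARD('a)" r] r by simp
  then have majorant: "(\<lambda>\<alpha>. r ^ mdeg \<alpha> * norm (c \<alpha>)) summable_on UNIV"
    using r(1) by (intro summable_on_comparison_test[OF has_sum_imp_summable[OF S]])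
      (auto intro!: mult_right_mono power_mono)
  show ?thesis
  proof (rule that[OF r(1) _ majorant])
    show "((\<lambda>\<alpha>. monomial u \<alpha> *\<^sub>R c \<alpha>) has_sum h (a + u)) UNIV"
      if "norm u \<le> real CARD('a) * r" for u
      using that expand r(2) by simp
  qed
qed

lemma real_analytic_compose:
  fixes h :: "real^'s \<Rightarrow> real^'m" and f :: "real^'m \<Rightarrow> real^'k"
  assumes "real_analytic h" "real_analytic f"
  shows "real_analytic (f \<circ> h)"
  unfolding real_analytic_def
proof
  fix a :: "real^'s"
  obtain t c S where t: "0 < t"
    and h_expand: "\<And>u. norm u \<le> t \<Longrightarrow> ((\<lambda>\<alpha>. monomial u \<alpha> *\<^sub>R c \<alpha>) has_sum h (a + u)) UNIV"
    and S: "((\<lambda>\<alpha>. t ^ mdeg \<alpha> * norm (c \<alpha>)) has_sum S) UNIV"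
    by (rule real_analytic_expansion[OF assms(1), where a = a]) blast
  obtain r d where r: "0 < r"
    and f_expand: "\<And>v. norm v \<le> real CARD('m) * r \<Longrightarrow>
      ((\<lambda>\<beta>. monomial v \<beta> *\<^sub>R d \<beta>) has_sum f (h a + v)) UNIV"
    and d: "(\<lambda>\<beta>. r ^ mdeg \<beta> * norm (d \<beta>)) summable_on UNIV"
    by (rule real_analytic_expansion_card_ball[OF assms(2), where a = "h a"]) blast
  have "0 \<le> S" using S by (rule has_sum_nonneg) (use t in simp)
  define \<delta> where "\<delta> = min t (t * r / (S + 1))"
  have \<delta>: "0 < \<delta>" using t r \<open>0 \<le> S\<close> by (simp add: \<delta>_def)
  define \<sigma> :: "('m \<Rightarrow> nat) \<times> ('m \<times> nat \<Rightarrow> 's \<Rightarrow> nat) \<Rightarrow> 's \<Rightarrow> nat"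
    where "\<sigma> = (\<lambda>(\<beta>, \<tau>). \<lambda>i. \<Sum>jk\<in>exponent_slots \<beta>. \<tau> jk i)"
  define Q :: "('m \<Rightarrow> nat) \<times> ('m \<times> nat \<Rightarrow> 's \<Rightarrow> nat) \<Rightarrow> real^'k"
    where "Q = (\<lambda>(\<beta>, \<tau>). (\<Prod>jk\<in>exponent_slots \<beta>. c (\<tau> jk) $ fst jk) *\<^sub>R d \<beta>)"
  have "((\<lambda>z. monomial u (\<sigma> z) *\<^sub>R Q z) has_sum f (h (a + u)))
      (SIGMA \<beta>:UNIV. PiE (exponent_slots \<beta>) (\<lambda>_. UNIV - {\<lambda>_. 0}))" if u: "norm u < \<delta>" for u
  proof -
    have "norm u * S \<le> t * r / (S + 1) * S"
      using u \<open>0 \<le> S\<close> by (intro mult_right_mono) (auto simp: \<delta>_def)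
    also have "\<dots> = t * r * (S / (S + 1))" by simp
    also have "\<dots> \<le> t * r"
      using t r \<open>0 \<le> S\<close> by (intro mult_left_le) auto
    finally have "norm u / t * S \<le> r" using t by (simp add: field_simps)
    moreover have "norm u \<le> t" using u by (simp add: \<delta>_def)
    ultimately show ?thesis
      using power_series_compose_double_sum[where u = u, OF h_expand S t f_expand d]
      by (simp add: \<sigma>_def Q_def case_prod_unfold prod.distrib monomial_sum_index)
  qed
  then obtain E where E: "\<And>u. norm u < \<delta> \<Longrightarrow> ((\<lambda>\<gamma>. monomial u \<gamma> *\<^sub>R E \<gamma>) has_sum f (h (a + u))) UNIV"
    by (rule power_series_regroup[OF \<delta>]) blast+
  show "\<exists>r>0. \<exists>c. \<forall>x\<in>ball a r. ((\<lambda>\<alpha>. (\<Prod>i\<in>UNIV. (x $ i - a $ i) ^ \<alpha> i) *\<^sub>R c \<alpha>) has_sum (f \<circ> h) x) UNIV"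
  proof (intro exI conjI ballI)
    fix x assume "x \<in> ball a \<delta>"
    then show "((\<lambda>\<alpha>. (\<Prod>i\<in>UNIV. (x $ i - a $ i) ^ \<alpha> i) *\<^sub>R E \<alpha>) has_sum (f \<circ> h) x) UNIV"
      using E[of "x - a"] by (simp add: monomial_def dist_norm norm_minus_commute)
  qed (fact \<delta>)
qed

subsection \<open>Jacobians\<close>

lemma det_gram_nonzero_iff:
  fixes A :: "real^'n^'p"
  shows "det (transpose A ** A) \<noteq> 0 \<longleftrightarrow> (\<forall>x. A *v x = 0 \<longrightarrow> x = 0)"
proof
  assume "det (transpose A ** A) \<noteq> 0"
  then obtain B where B: "B ** (transpose A ** A) = mat 1"
    using invertible_det_nz invertible_left_inverse by blast
  show "\<forall>x. A *v x = 0 \<longrightarrow> x = 0"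
  proof (intro allI impI)
    fix x assume "A *v x = 0"
    then have "B *v ((transpose A ** A) *v x) = 0"
      by (simp add: matrix_vector_mul_assoc[symmetric])
    then show "x = 0" by (simp add: matrix_vector_mul_assoc B)
  qed
next
  assume ker: "\<forall>x. A *v x = 0 \<longrightarrow> x = 0"
  have "x = 0" if "(transpose A ** A) *v x = 0" for x
  proof -
    have "(A *v x) \<bullet> (A *v x) = ((A *v x) v* A) \<bullet> x" by (simp add: dot_lmul_matrix)
    also have "\<dots> = x \<bullet> (transpose A *v (A *v x))" by (simp add: transpose_matrix_vector inner_commute)
    also have "\<dots> = x \<bullet> ((transpose A ** A) *v x)" by (simp add: matrix_vector_mul_assoc)
    finally have "(A *v x) \<bullet> (A *v x) = x \<bullet> ((transpose A ** A) *v x)" .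
    then show "x = 0" using that ker by simp
  qed
  then obtain B where "B ** (transpose A ** A) = mat 1"
    using matrix_left_invertible_ker by blast
  then show "det (transpose A ** A) \<noteq> 0"
    using invertible_det_nz invertible_left_inverse by blast
qed

lemma Jac_nonzero_iff_derivative_injective:
  fixes h :: "real^'a \<Rightarrow> real^'b"
  assumes "(h has_derivative D) (at v)" "CARD('a) \<le> CARD('b)"
  shows "Jac h v \<noteq> 0 \<longleftrightarrow> (\<forall>x. D x = 0 \<longrightarrow> x = 0)"
proof -
  have "Dmat h v = matrix D"
    using frechet_derivative_at[OF assms(1)] by (simp add: Dmat_def)
  moreover have "matrix D *v x = D x" for x
    using matrix_vector_mul(3)[OF has_derivative_bounded_linear[OF assms(1)]] by metis
  ultimately show ?thesis
    using assms(2) by (simp add: Jac_def det_gram_nonzero_iff)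
qed

lemma Jac_compose_nonzero:
  fixes h :: "real^'s \<Rightarrow> real^'m" and f :: "real^'m \<Rightarrow> real^'k"
  assumes "h differentiable (at v)" "f differentiable (at (h v))"
    and "CARD('s) \<le> CARD('m)" "CARD('m) \<le> CARD('k)"
    and "Jac h v \<noteq> 0" "Jac f (h v) \<noteq> 0"
  shows "Jac (f \<circ> h) v \<noteq> 0"
proof -
  obtain Dh Df where Dh: "(h has_derivative Dh) (at v)" and Df: "(f has_derivative Df) (at (h v))"
    using assms(1,2) by (auto simp: differentiable_def)
  have "\<forall>x. Dh x = 0 \<longrightarrow> x = 0" "\<forall>y. Df y = 0 \<longrightarrow> y = 0"
    using assms(3-6) Jac_nonzero_iff_derivative_injective[OF Dh]
      Jac_nonzero_iff_derivative_injective[OF Df] by simp_all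
  then have "\<forall>x. (Df \<circ> Dh) x = 0 \<longrightarrow> x = 0" by simp
  moreover have "((f \<circ> h) has_derivative Df \<circ> Dh) (at v)" by (rule diff_chain_at[OF Dh Df])
  ultimately show ?thesis
    using assms(3,4) Jac_nonzero_iff_derivative_injective by (metis le_trans)
qed

subsection \<open>Push-forward\<close>

lemma s_analytic_distr_immersion:
  fixes \<mu> :: "(real^'m) measure" and f :: "real^'m \<Rightarrow> real^'k"
  assumes \<mu>: "s_analytic TYPE('s::finite) \<mu>" "sets \<mu> = sets borel"
    and f: "CARD('m) \<le> CARD('k)" "real_analytic f" "\<And>v. Jac f v \<noteq> 0"
  shows "s_analytic TYPE('s) (distr \<mu> borel f)"
  unfolding s_analytic_def
proof (intro conjI ballI impI)
  show "CARD('s) \<le> CARD('k)" using \<mu>(1) f(1) by (simp add: s_analytic_def)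
  have f_meas: "f \<in> measurable \<mu> borel"
    using real_analytic_borel_measurable[OF f(2)] by (simp add: measurable_cong_sets[OF \<mu>(2) refl])
  fix U :: "(real^'k) set"
  assume U: "U \<in> sets borel" and "emeasure (distr \<mu> borel f) U > 0"
  moreover have "space \<mu> = UNIV" using sets_eq_imp_space_eq[OF \<mu>(2)] by simp
  ultimately have "emeasure \<mu> (f -` U) > 0" "f -` U \<in> sets borel"
    using measurable_sets[OF f_meas U] \<mu>(2) by (simp_all add: emeasure_distr[OF f_meas U])
  then obtain A and h :: "real^'s \<Rightarrow> real^'m" and v where
    A: "A \<in> sets borel" "emeasure lborel A > 0" and h: "real_analytic h" "Jac h v \<noteq> 0"
    and "h ` A \<subseteq> f -` U"
    using \<mu>(1) unfolding s_analytic_def by blast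
  then have "(f \<circ> h) ` A \<subseteq> U" by auto
  moreover have "Jac (f \<circ> h) v \<noteq> 0"
    using \<mu>(1) f h by (intro Jac_compose_nonzero real_analytic_differentiable) (auto simp: s_analytic_def)
  ultimately show "\<exists>(A :: (real^'s) set) (h :: real^'s \<Rightarrow> real^'k). A \<in> sets borel \<and>
      emeasure lborel A > 0 \<and> real_analytic h \<and> (\<exists>v. Jac h v \<noteq> 0) \<and> h ` A \<subseteq> U"
    using A real_analytic_compose[OF h(1) f(2)] by blast
qed

theorem lemma11:
  fixes M :: "'a measure" and x :: "'a \<Rightarrow> real^'m" and f :: "real^'m \<Rightarrow> real^'k"
  assumes "prob_space M"
    and "x \<in> borel_measurable M"
    and "s_analytic TYPE('s::finite) (distr M borel x)"
    and "CARD('m) \<le> CARD('k)"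
    and "real_analytic f"
    and "\<forall>v. Jac f v > 0"
  shows "s_analytic TYPE('s::finite) (distr M borel (\<lambda>\<omega>. f (x \<omega>)))"
proof -
  have "distr M borel (\<lambda>\<omega>. f (x \<omega>)) = distr (distr M borel x) borel f"
    using distr_distr[OF real_analytic_borel_measurable[OF assms(5)] assms(2)] by (simp add: comp_def)
  moreover have "Jac f v \<noteq> 0" for v using assms(6) by (metis less_irrefl)
  ultimately show ?thesis
    using s_analytic_distr_immersion[OF assms(3) _ assms(4,5)] by simp
qed

end
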